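(* Let $n\geq 3$, $p,q>0$ with $pq>1$, $\alpha\in(0,n)$ and $\sigma_1,\sigma_2\in[0,\alpha)$, and consider the system $$u(x)=\int_{\mathbb{R}^n}\frac{v(y)^q}{|x-y|^{n-\alpha}|y|^{\sigma_1}}\,dy,\qquad v(x)=\int_{\mathbb{R}^n}\frac{u(y)^p}{|x-y|^{n-\alpha}|y|^{\sigma_2}}\,dy,\qquad x\in\mathbb{R}^n.$$ (i) If $u,v$ are bounded and decaying positive solutions of this system, then there exists a constant $C>0$ such that, as $|x|\to\infty$, $u(x)\leq C|x|^{-q_0}$ and $v(x)\leq C|x|^{-p_0}$. (ii) Suppose $q\geq p$ and $\sigma_1\geq\sigma_2$, and let $u,v$ be positive solutions of the system. Then there exists a constant $c>0$ such that, as $|x|\to\infty$, $$u(x)\geq \frac{c}{|x|^{n-\alpha}}\quad\text{and}\quad v(x)\geq \frac{c}{|x|^{\min\{n-\alpha,\ p(n-\alpha)-(\alpha-\sigma_2)\}}}.$$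
   Context: A positive solution is a pair of positive functions $u,v$ on $\mathbb{R}^n$ satisfying both equations. Define $$p_0=\frac{\alpha(1+p)-(\sigma_2+\sigma_1p)}{pq-1},\qquad q_0=\frac{\alpha(1+q)-(\sigma_1+\sigma_2q)}{pq-1}.$$ The notation $f(x)\simeq g(x)$ means that there exist constants $c,C>0$ with $cg(x)\leq f(x)\leq Cg(x)$ as $|x|\to\infty$. A positive solution $u,v$ is called decaying if $u(x)\simeq|x|^{-\theta_1}$ and $v(x)\simeq|x|^{-\theta_2}$ for some $\theta_1,\theta_2>0$. *)

theory Defs
  imports "HOL-Analysis.Analysis"
begin

definition weighted_riesz ::
  "real \<Rightarrow> real \<Rightarrow> (real^'n \<Rightarrow> real) \<Rightarrow> real^'n \<Rightarrow> ennreal" where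
  "weighted_riesz \<alpha> \<sigma> f x =
     (\<integral>\<^sup>+ y. ennreal (f y / (norm (x - y) powr (real CARD('n) - \<alpha>) * norm y powr \<sigma>)) \<partial>lborel)"

text \<open>A positive solution: positive measurable u, v with
  u(x) = int v(y)^q / (|x-y|^(n-alpha) |y|^sigma1) dy and
  v(x) = int u(y)^p / (|x-y|^(n-alpha) |y|^sigma2) dy for every x
  (the integrals being finite, since u, v are real-valued).\<close>
definition positive_solution ::
  "real \<Rightarrow> real \<Rightarrow> real \<Rightarrow> real \<Rightarrow> real \<Rightarrow> (real^'n \<Rightarrow> real) \<Rightarrow> (real^'n \<Rightarrow> real) \<Rightarrow> bool" where
  "positive_solution p q \<alpha> \<sigma>\<^sub>1 \<sigma>\<^sub>2 u v \<longleftrightarrow>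
     (\<forall>x. u x > 0) \<and> (\<forall>x. v x > 0) \<and>
     u \<in> borel_measurable lborel \<and> v \<in> borel_measurable lborel \<and>
     (\<forall>x. ennreal (u x) = weighted_riesz \<alpha> \<sigma>\<^sub>1 (\<lambda>y. v y powr q) x) \<and>
     (\<forall>x. ennreal (v x) = weighted_riesz \<alpha> \<sigma>\<^sub>2 (\<lambda>y. u y powr p) x)"

definition decays_like :: "(real^'n \<Rightarrow> real) \<Rightarrow> real \<Rightarrow> bool" where
  "decays_like f \<theta> \<longleftrightarrow> (\<exists>c C. c > 0 \<and> C > 0 \<and>
     (\<forall>\<^sub>F x in at_infinity. c * norm x powr (-\<theta>) \<le> f x \<and> f x \<le> C * norm x powr (-\<theta>)))"

definition decaying :: "(real^'n \<Rightarrow> real) \<Rightarrow> (real^'n \<Rightarrow> real) \<Rightarrow> bool" where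
  "decaying u v \<longleftrightarrow> (\<exists>\<theta>\<^sub>1 \<theta>\<^sub>2. \<theta>\<^sub>1 > 0 \<and> \<theta>\<^sub>2 > 0 \<and> decays_like u \<theta>\<^sub>1 \<and> decays_like v \<theta>\<^sub>2)"

definition p0 :: "real \<Rightarrow> real \<Rightarrow> real \<Rightarrow> real \<Rightarrow> real \<Rightarrow> real" where
  "p0 p q \<alpha> \<sigma>\<^sub>1 \<sigma>\<^sub>2 = (\<alpha> * (1 + p) - (\<sigma>\<^sub>2 + \<sigma>\<^sub>1 * p)) / (p * q - 1)"

definition q0 :: "real \<Rightarrow> real \<Rightarrow> real \<Rightarrow> real \<Rightarrow> real \<Rightarrow> real" where
  "q0 p q \<alpha> \<sigma>\<^sub>1 \<sigma>\<^sub>2 = (\<alpha> * (1 + q) - (\<sigma>\<^sub>1 + \<sigma>\<^sub>2 * q)) / (p * q - 1)"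

end

theory Submission
  imports Defs
begin

(*
  Integrating the kernel only over the ball B(x, |x|/2), where |y| is comparable to |x|, turns a
  lower bound v(y) \<ge> c |y|^(-\<theta>2) into u(x) \<ge> K |x|^(\<alpha> - \<sigma>1 - q \<theta>2). For a decaying
  solution, u \<simeq> |x|^(-\<theta>1) and v \<simeq> |x|^(-\<theta>2), this forces \<theta>1 \<le> q \<theta>2 + \<sigma>1 - \<alpha>
  and symmetrically \<theta>2 \<le> p \<theta>1 + \<sigma>2 - \<alpha>; as p q > 1 these give \<theta>1 \<ge> q0 and \<theta>2 \<ge> p0.
  For the lower bounds, integrating over the unit ball instead, where |x - y| \<le> 2|x|, gives
  u, v \<ge> c |x|^(\<alpha> - n); the ball estimate applied to this bound for u then gives
  v \<ge> K |x|^(\<alpha> - \<sigma>2 - p (n - \<alpha>)).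
*)

lemma eventually_norm_ge_at_infinity:
  "\<forall>\<^sub>F x in at_infinity. c \<le> norm (x :: 'a :: real_normed_vector)"
  by (rule eventually_at_infinityI)

lemma exponent_le_of_eventually_powr_le:
  fixes a b K C :: real
  assumes "K > 0" and "\<forall>\<^sub>F t in at_top. K * t powr a \<le> C * t powr b"
  shows "a \<le> b"
proof (rule ccontr)
  assume "\<not> a \<le> b"
  then have "((\<lambda>t. C * t powr (b - a)) \<longlongrightarrow> C * 0) at_top"
    by (intro tendsto_mult tendsto_const tendsto_neg_powr filterlim_ident) auto
  moreover have "\<forall>\<^sub>F t in at_top. K \<le> C * t powr (b - a)"
    using assms(2) eventually_gt_at_top[of 0]
    by eventually_elim (simp add: powr_diff field_simps)
  ultimately have "K \<le> C * 0"
    by (rule tendsto_lowerbound) simp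
  with assms(1) show False by simp
qed

lemma eventually_at_top_of_eventually_norm:
  assumes "\<forall>\<^sub>F x in at_infinity. P (norm (x :: 'a :: euclidean_space))"
  shows "\<forall>\<^sub>F t in at_top. P t"
proof -
  obtain b where b: "\<And>x :: 'a. b \<le> norm x \<Longrightarrow> P (norm x)"
    using assms unfolding eventually_at_infinity by blast
  show ?thesis
  proof (rule eventually_at_top_linorderI[of "max b 0"])
    fix t :: real assume "max b 0 \<le> t"
    moreover obtain x :: 'a where "norm x = t"
      using vector_choose_size[of t] \<open>max b 0 \<le> t\<close> by auto
    ultimately show "P t" using b by fastforce
  qed
qed

lemma nn_integral_ge_on_punctured_ball:
  fixes x :: "'a :: euclidean_space" and g :: "'a \<Rightarrow> real"
  assumes "0 < r" "0 \<le> m" "\<And>y. y \<in> ball x r \<Longrightarrow> y \<noteq> x \<Longrightarrow> m \<le> g y"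
  shows "ennreal (m * (unit_ball_vol DIM('a) * r ^ DIM('a))) \<le> (\<integral>\<^sup>+ y. ennreal (g y) \<partial>lborel)"
proof -
  have "emeasure lborel (ball x r - {x}) = emeasure lborel (ball x r)"
    by (rule emeasure_Diff_null_set) auto
  then have "ennreal (m * (unit_ball_vol DIM('a) * r ^ DIM('a)))
      = (\<integral>\<^sup>+ y. ennreal m * indicator (ball x r - {x}) y \<partial>lborel)"
    using assms(1,2) by (simp add: nn_integral_cmult_indicator emeasure_ball ennreal_mult)
  also have "\<dots> \<le> (\<integral>\<^sup>+ y. ennreal (g y) \<partial>lborel)"
    by (rule nn_integral_mono) (auto simp: indicator_def assms(3) ennreal_leI)
  finally show ?thesis .
qed

lemma nn_integral_ball_pos:
  fixes f :: "'a :: euclidean_space \<Rightarrow> real"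
  assumes f: "f \<in> borel_measurable lborel" and pos: "\<And>y. y \<noteq> c \<Longrightarrow> f y > 0" and "0 < r"
  shows "0 < (\<integral>\<^sup>+ y. ennreal (f y) * indicator (ball c r) y \<partial>lborel)"
proof (rule ccontr)
  assume "\<not> ?thesis"
  moreover have [measurable]: "f \<in> borel_measurable borel" "ball c r \<in> sets borel"
    using f by auto
  then have "(\<lambda>y. ennreal (f y) * indicator (ball c r) y) \<in> borel_measurable lborel"
    by measurable
  ultimately have "AE y in lborel. ennreal (f y) * indicator (ball c r) y = 0"
    by (simp add: nn_integral_0_iff_AE)
  then have "AE y in lborel. y \<notin> ball c r - {c}"
    by eventually_elim (use pos in \<open>force simp: indicator_def\<close>)
  then have "emeasure lborel (ball c r - {c}) = 0"
    by (subst (asm) AE_iff_measurable[of "ball c r - {c}"]) auto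
  moreover have "emeasure lborel (ball c r - {c}) = emeasure lborel (ball c r)"
    by (rule emeasure_Diff_null_set) auto
  ultimately show False
    using \<open>0 < r\<close> unit_ball_vol_pos[of "real DIM('a)"] by (simp add: emeasure_ball)
qed

lemma weighted_riesz_ge_on_half_ball:
  fixes x :: "real^'n" and f :: "real^'n \<Rightarrow> real" and a \<alpha> \<sigma> :: real
  assumes x: "0 < norm x" and "0 \<le> a" and "\<alpha> < CARD('n)" and "0 \<le> \<sigma>"
    and f: "\<And>y. y \<in> ball x (norm x / 2) \<Longrightarrow> a \<le> f y"
  shows "ennreal (a / ((norm x / 2) powr (CARD('n) - \<alpha>) * (3/2 * norm x) powr \<sigma>)
            * (unit_ball_vol CARD('n) * (norm x / 2) ^ CARD('n))) \<le> weighted_riesz \<alpha> \<sigma> f x"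
proof -
  have "a / ((norm x / 2) powr (CARD('n) - \<alpha>) * (3/2 * norm x) powr \<sigma>)
          \<le> f y / (norm (x - y) powr (CARD('n) - \<alpha>) * norm y powr \<sigma>)"
    if y: "y \<in> ball x (norm x / 2)" "y \<noteq> x" for y
  proof -
    have "norm (x - y) < norm x / 2" "0 < norm (x - y)"
      using y by (auto simp: dist_norm)
    moreover from this have "norm x / 2 \<le> norm y" "norm y \<le> 3/2 * norm x"
      using norm_triangle_ineq2[of x y] norm_triangle_ineq3[of y x] by (auto simp: norm_minus_commute)
    moreover have "0 < norm y"
      using x \<open>norm x / 2 \<le> norm y\<close> by linarith
    ultimately show ?thesis
      using assms y
      by (intro frac_le mult_mono powr_mono2) (auto intro: order.trans[OF _ f])
  qed
  then show ?thesis
    unfolding weighted_riesz_def using assms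
    by (intro nn_integral_ge_on_punctured_ball[where 'a="real^'n", simplified]) auto
qed

lemma half_ball_bound_powr_scaling:
  fixes t c \<theta> q m \<sigma> V :: real and N :: nat
  assumes t: "0 < t" and c: "0 < c"
  shows "(c * (3/2 * t) powr (- \<theta>)) powr q / ((t / 2) powr m * (3/2 * t) powr \<sigma>) * (V * (t / 2) ^ N)
        = (c * (3/2) powr (- \<theta>)) powr q / ((1/2) powr m * (3/2) powr \<sigma>) * V * (1/2) ^ N
          * t powr (real N - m - \<sigma> - q * \<theta>)"
proof -
  have "(3/2 * t) powr (- \<theta>) = (3/2) powr (- \<theta>) * t powr (- \<theta>)"
    using t by (intro powr_mult)
  then have "(c * (3/2 * t) powr (- \<theta>)) powr q = (c * (3/2) powr (- \<theta>)) powr q * t powr (- q * \<theta>)"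
    using assms
    by (simp only: mult.assoc[symmetric] powr_mult[of "c * _" "t powr _"]) (simp add: powr_powr mult.commute)
  moreover have "(t / 2) powr m = (1/2) powr m * t powr m" "(3/2 * t) powr \<sigma> = (3/2) powr \<sigma> * t powr \<sigma>"
    using t by (simp_all add: powr_mult[symmetric])
  moreover have "(t / 2) ^ N = (1/2) ^ N * t powr real N"
    using t by (simp add: powr_realpow power_divide)
  moreover have "t powr (- q * \<theta>) * t powr real N = t powr (real N - m - \<sigma> - q * \<theta>) * (t powr m * t powr \<sigma>)"
    using t by (simp add: powr_add[symmetric])
  ultimately show ?thesis
    using t by (simp add: field_simps)
qed

lemma weighted_riesz_ge_of_power_lower_bound:
  fixes v :: "real^'n \<Rightarrow> real" and c \<theta> q \<alpha> \<sigma> :: real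
  assumes "0 < c" "0 \<le> \<theta>" "0 \<le> q" "\<alpha> < CARD('n)" "0 \<le> \<sigma>"
    and v: "\<forall>\<^sub>F y in at_infinity. c * norm y powr (- \<theta>) \<le> v y"
  shows "\<exists>K>0. \<forall>\<^sub>F x in at_infinity.
           ennreal (K * norm x powr (\<alpha> - \<sigma> - q * \<theta>)) \<le> weighted_riesz \<alpha> \<sigma> (\<lambda>y. v y powr q) x"
proof -
  obtain R where R: "\<And>y. R \<le> norm y \<Longrightarrow> c * norm y powr (- \<theta>) \<le> v y"
    using v unfolding eventually_at_infinity by blast
  define n where "n = real CARD('n)"
  define K where "K = (c * (3/2) powr (- \<theta>)) powr q / ((1/2) powr (n - \<alpha>) * (3/2) powr \<sigma>)
                        * unit_ball_vol n * (1/2) ^ CARD('n)"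
  have "ennreal (K * norm x powr (\<alpha> - \<sigma> - q * \<theta>)) \<le> weighted_riesz \<alpha> \<sigma> (\<lambda>y. v y powr q) x"
    if x: "max (2 * R) 1 \<le> norm x" for x :: "real^'n"
  proof -
    define t where "t = norm x"
    have t: "0 < t" "2 * R \<le> t"
      using x by (auto simp: t_def)
    define a where "a = (c * (3/2 * t) powr (- \<theta>)) powr q"
    have "a \<le> v y powr q" if "y \<in> ball x (t / 2)" for y
    proof -
      have "t / 2 \<le> norm y" "norm y \<le> 3/2 * t"
        using that norm_triangle_ineq2[of x y] norm_triangle_ineq3[of y x]
        by (auto simp: t_def dist_norm norm_minus_commute)
      then have "c * (3/2 * t) powr (- \<theta>) \<le> c * norm y powr (- \<theta>)"
        using assms t by (intro mult_left_mono powr_mono2') auto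
      also have "\<dots> \<le> v y"
        using R t \<open>t / 2 \<le> norm y\<close> by simp
      finally show ?thesis
        unfolding a_def using assms t by (intro powr_mono2) auto
    qed
    then have "ennreal (a / ((t / 2) powr (n - \<alpha>) * (3/2 * t) powr \<sigma>) * (unit_ball_vol n * (t / 2) ^ CARD('n)))
        \<le> weighted_riesz \<alpha> \<sigma> (\<lambda>y. v y powr q) x"
      using assms t unfolding n_def t_def a_def
      by (intro weighted_riesz_ge_on_half_ball) auto
    moreover have "a / ((t / 2) powr (n - \<alpha>) * (3/2 * t) powr \<sigma>) * (unit_ball_vol n * (t / 2) ^ CARD('n))
        = K * t powr (\<alpha> - \<sigma> - q * \<theta>)"
      using half_ball_bound_powr_scaling[OF \<open>0 < t\<close> \<open>0 < c\<close>, of \<theta> q "n - \<alpha>" \<sigma> "unit_ball_vol n" "CARD('n)"]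
      unfolding a_def K_def n_def by simp
    ultimately show ?thesis
      by (simp add: t_def)
  qed
  moreover have "K > 0"
    using assms by (simp add: K_def n_def)
  ultimately show ?thesis
    by (blast intro: eventually_at_infinityI)
qed

lemma weighted_riesz_ge_kernel_decay:
  fixes f :: "real^'n \<Rightarrow> real" and \<alpha> \<sigma> :: real
  assumes f: "f \<in> borel_measurable lborel" and pos: "\<And>y. f y > 0" and "\<alpha> < CARD('n)"
  shows "\<exists>c>0. \<forall>\<^sub>F x in at_infinity.
           ennreal (c / norm x powr (CARD('n) - \<alpha>)) \<le> weighted_riesz \<alpha> \<sigma> f x"
proof -
  define n where "n = real CARD('n)"
  define I where "I = (\<integral>\<^sup>+ y. ennreal (f y / norm y powr \<sigma>) * indicator (ball 0 1) y \<partial>lborel)"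
  have [measurable]: "f \<in> borel_measurable borel" "ball (0 :: real^'n) 1 \<in> sets borel"
    using f by auto
  have "0 < I"
    unfolding I_def using f pos by (intro nn_integral_ball_pos) auto
  then obtain c0 where c0: "0 < c0" "ennreal c0 \<le> I"
    by (metis dense ennreal_enn2real ennreal_less_zero_iff enn2real_positive_iff less_imp_le
        order.strict_trans top.not_eq_extremum)
  have "ennreal (c0 / 2 powr (n - \<alpha>) / norm x powr (n - \<alpha>)) \<le> weighted_riesz \<alpha> \<sigma> f x"
    if x: "1 \<le> norm x" for x :: "real^'n"
  proof -
    define s where "s = (2 * norm x) powr (n - \<alpha>)"
    have "0 < s"
      using x by (auto simp: s_def)
    have "ennreal (f y / norm y powr \<sigma>) * indicator (ball 0 1) y * ennreal (1 / s)
        \<le> ennreal (f y / (norm (x - y) powr (n - \<alpha>) * norm y powr \<sigma>))" for y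
    proof (cases "y \<in> ball 0 1")
      case True
      then have "0 < norm (x - y)" "norm (x - y) \<le> 2 * norm x"
        using x norm_triangle_ineq2[of x y] norm_triangle_ineq4[of x y] by auto
      then have "norm (x - y) powr (n - \<alpha>) \<le> s"
        unfolding s_def using assms by (intro powr_mono2) (auto simp: n_def)
      moreover have "0 < norm (x - y) powr (n - \<alpha>)"
        using \<open>0 < norm (x - y)\<close> by simp
      ultimately have "f y / norm y powr \<sigma> * (1 / s) \<le> f y / (norm (x - y) powr (n - \<alpha>) * norm y powr \<sigma>)"
        using pos[of y] \<open>0 < s\<close> by (cases "norm y powr \<sigma> = 0") (auto intro!: divide_left_mono)
      then show ?thesis
        using True \<open>0 < s\<close> pos[of y] by (simp add: ennreal_mult[symmetric] ennreal_leI)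
    qed simp
    then have "I * ennreal (1 / s) \<le> weighted_riesz \<alpha> \<sigma> f x"
      unfolding I_def weighted_riesz_def n_def
      by (subst nn_integral_multc[symmetric]) (auto intro!: nn_integral_mono)
    have "c0 / 2 powr (n - \<alpha>) / norm x powr (n - \<alpha>) = c0 * (1 / s)"
      using x by (simp add: s_def powr_mult)
    then have "ennreal (c0 / 2 powr (n - \<alpha>) / norm x powr (n - \<alpha>)) = ennreal c0 * ennreal (1 / s)"
      using c0 \<open>0 < s\<close> by (subst ennreal_mult[symmetric]) auto
    also have "\<dots> \<le> I * ennreal (1 / s)"
      using c0(2) by (rule mult_right_mono) simp
    finally show ?thesis
      using \<open>I * ennreal (1 / s) \<le> weighted_riesz \<alpha> \<sigma> f x\<close> by simp
  qed
  then show ?thesis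
    using c0 by (auto simp: n_def intro!: exI[of _ "c0 / 2 powr (n - \<alpha>)"] eventually_at_infinityI)
qed

lemma decay_exponent_le_of_riesz:
  fixes u v :: "real^'n \<Rightarrow> real" and q \<alpha> \<sigma> c C \<theta>\<^sub>1 \<theta>\<^sub>2 :: real
  assumes u: "\<And>x. ennreal (u x) = weighted_riesz \<alpha> \<sigma> (\<lambda>y. v y powr q) x"
    and "0 \<le> q" "\<alpha> < CARD('n)" "0 \<le> \<sigma>" "0 < c" "0 \<le> \<theta>\<^sub>2"
    and v_lower: "\<forall>\<^sub>F y in at_infinity. c * norm y powr (- \<theta>\<^sub>2) \<le> v y"
    and u_upper: "\<forall>\<^sub>F x in at_infinity. u x \<le> C * norm x powr (- \<theta>\<^sub>1)"
  shows "\<theta>\<^sub>1 \<le> q * \<theta>\<^sub>2 + \<sigma> - \<alpha>"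
proof -
  obtain K where "K > 0" and K: "\<forall>\<^sub>F x in at_infinity.
      ennreal (K * norm x powr (\<alpha> - \<sigma> - q * \<theta>\<^sub>2)) \<le> ennreal (u x)"
    using weighted_riesz_ge_of_power_lower_bound[OF assms(5,6,2,3,4) v_lower] u by auto
  have "\<forall>\<^sub>F x :: real^'n in at_infinity. K * norm x powr (\<alpha> - \<sigma> - q * \<theta>\<^sub>2) \<le> C * norm x powr (- \<theta>\<^sub>1)"
    using K u_upper eventually_norm_ge_at_infinity[of 1]
  proof eventually_elim
    case (elim x)
    then have "x \<noteq> 0"
      by auto
    with \<open>K > 0\<close> have "0 < K * norm x powr (\<alpha> - \<sigma> - q * \<theta>\<^sub>2)"
      by simp
    with elim show ?case
      by (auto simp: ennreal_le_iff2)
  qed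
  then have "\<forall>\<^sub>F t in at_top. K * t powr (\<alpha> - \<sigma> - q * \<theta>\<^sub>2) \<le> C * t powr (- \<theta>\<^sub>1)"
    by (rule eventually_at_top_of_eventually_norm)
  then have "\<alpha> - \<sigma> - q * \<theta>\<^sub>2 \<le> - \<theta>\<^sub>1"
    by (rule exponent_le_of_eventually_powr_le[OF \<open>K > 0\<close>])
  then show ?thesis
    by simp
qed

lemma q0_p0_le_of_decay_inequalities:
  fixes p q \<alpha> \<sigma>\<^sub>1 \<sigma>\<^sub>2 \<theta>\<^sub>1 \<theta>\<^sub>2 :: real
  assumes "0 < p" "0 < q" "1 < p * q"
    and "\<theta>\<^sub>1 \<le> q * \<theta>\<^sub>2 + \<sigma>\<^sub>1 - \<alpha>" and "\<theta>\<^sub>2 \<le> p * \<theta>\<^sub>1 + \<sigma>\<^sub>2 - \<alpha>"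
  shows "q0 p q \<alpha> \<sigma>\<^sub>1 \<sigma>\<^sub>2 \<le> \<theta>\<^sub>1" and "p0 p q \<alpha> \<sigma>\<^sub>1 \<sigma>\<^sub>2 \<le> \<theta>\<^sub>2"
proof -
  have "q * \<theta>\<^sub>2 \<le> q * (p * \<theta>\<^sub>1 + \<sigma>\<^sub>2 - \<alpha>)" "p * \<theta>\<^sub>1 \<le> p * (q * \<theta>\<^sub>2 + \<sigma>\<^sub>1 - \<alpha>)"
    using assms by (auto intro: mult_left_mono)
  then show "q0 p q \<alpha> \<sigma>\<^sub>1 \<sigma>\<^sub>2 \<le> \<theta>\<^sub>1" "p0 p q \<alpha> \<sigma>\<^sub>1 \<sigma>\<^sub>2 \<le> \<theta>\<^sub>2"
    using assms unfolding q0_def p0_def by (simp_all add: pos_divide_le_eq algebra_simps)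
qed

lemma eventually_le_powr_mono:
  fixes f :: "'a :: real_normed_vector \<Rightarrow> real"
  assumes "\<forall>\<^sub>F x in at_infinity. f x \<le> C * norm x powr (- \<theta>)" "\<theta>' \<le> \<theta>" "0 \<le> C" "C \<le> C'"
  shows "\<forall>\<^sub>F x in at_infinity. f x \<le> C' * norm x powr (- \<theta>')"
  using assms(1) eventually_norm_ge_at_infinity[of 1]
proof eventually_elim
  case (elim x)
  then have "C * norm x powr (- \<theta>) \<le> C' * norm x powr (- \<theta>')"
    using assms(2-4) by (intro mult_mono powr_mono) auto
  with elim show ?case
    by linarith
qed

lemma eventually_ge_div_powr_min:
  fixes f :: "'a :: real_normed_vector \<Rightarrow> real"
  assumes "\<forall>\<^sub>F x in at_infinity. a / norm x powr s \<le> f x"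
    and "\<forall>\<^sub>F x in at_infinity. b / norm x powr t \<le> f x"
  shows "\<forall>\<^sub>F x in at_infinity. min a b / norm x powr (min s t) \<le> f x"
  using assms(1,2) eventually_norm_ge_at_infinity[of 1]
proof eventually_elim
  case (elim x)
  show ?case
  proof (cases "s \<le> t")
    case True
    have "min a b / norm x powr s \<le> a / norm x powr s"
      by (intro divide_right_mono) auto
    with True elim show ?thesis
      by (simp add: min_def)
  next
    case False
    have "min a b / norm x powr t \<le> b / norm x powr t"
      by (intro divide_right_mono) auto
    with False elim show ?thesis
      by (simp add: min_def)
  qed
qed

lemma decaying_solution_upper_bound:
  fixes u v :: "real^'n \<Rightarrow> real" and p q \<alpha> \<sigma>\<^sub>1 \<sigma>\<^sub>2 :: real
  assumes "0 < p" "0 < q" "1 < p * q" "\<alpha> < CARD('n)" "0 \<le> \<sigma>\<^sub>1" "0 \<le> \<sigma>\<^sub>2"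
    and sol: "positive_solution p q \<alpha> \<sigma>\<^sub>1 \<sigma>\<^sub>2 u v" and "decaying u v"
  shows "\<exists>C>0. \<forall>\<^sub>F x in at_infinity.
           u x \<le> C * norm x powr (- q0 p q \<alpha> \<sigma>\<^sub>1 \<sigma>\<^sub>2) \<and> v x \<le> C * norm x powr (- p0 p q \<alpha> \<sigma>\<^sub>1 \<sigma>\<^sub>2)"
proof -
  obtain \<theta>\<^sub>1 \<theta>\<^sub>2 c\<^sub>1 C\<^sub>1 c\<^sub>2 C\<^sub>2 where "0 < \<theta>\<^sub>1" "0 < \<theta>\<^sub>2" "0 < c\<^sub>1" "0 < C\<^sub>1" "0 < c\<^sub>2" "0 < C\<^sub>2"
    and u: "\<forall>\<^sub>F x in at_infinity. c\<^sub>1 * norm x powr (- \<theta>\<^sub>1) \<le> u x \<and> u x \<le> C\<^sub>1 * norm x powr (- \<theta>\<^sub>1)"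
    and v: "\<forall>\<^sub>F x in at_infinity. c\<^sub>2 * norm x powr (- \<theta>\<^sub>2) \<le> v x \<and> v x \<le> C\<^sub>2 * norm x powr (- \<theta>\<^sub>2)"
    using \<open>decaying u v\<close> unfolding decaying_def decays_like_def by blast
  from u v have u_lower: "\<forall>\<^sub>F x in at_infinity. c\<^sub>1 * norm x powr (- \<theta>\<^sub>1) \<le> u x"
    and u_upper: "\<forall>\<^sub>F x in at_infinity. u x \<le> C\<^sub>1 * norm x powr (- \<theta>\<^sub>1)"
    and v_lower: "\<forall>\<^sub>F x in at_infinity. c\<^sub>2 * norm x powr (- \<theta>\<^sub>2) \<le> v x"
    and v_upper: "\<forall>\<^sub>F x in at_infinity. v x \<le> C\<^sub>2 * norm x powr (- \<theta>\<^sub>2)"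
    by (simp_all add: eventually_conj_iff)
  have "\<theta>\<^sub>1 \<le> q * \<theta>\<^sub>2 + \<sigma>\<^sub>1 - \<alpha>"
    using sol assms \<open>0 < c\<^sub>2\<close> \<open>0 < \<theta>\<^sub>2\<close> v_lower u_upper unfolding positive_solution_def
    by (intro decay_exponent_le_of_riesz[of u \<alpha> \<sigma>\<^sub>1 v q c\<^sub>2 \<theta>\<^sub>2]) auto
  moreover have "\<theta>\<^sub>2 \<le> p * \<theta>\<^sub>1 + \<sigma>\<^sub>2 - \<alpha>"
    using sol assms \<open>0 < c\<^sub>1\<close> \<open>0 < \<theta>\<^sub>1\<close> u_lower v_upper unfolding positive_solution_def
    by (intro decay_exponent_le_of_riesz[of v \<alpha> \<sigma>\<^sub>2 u p c\<^sub>1 \<theta>\<^sub>1]) auto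
  ultimately have "q0 p q \<alpha> \<sigma>\<^sub>1 \<sigma>\<^sub>2 \<le> \<theta>\<^sub>1" "p0 p q \<alpha> \<sigma>\<^sub>1 \<sigma>\<^sub>2 \<le> \<theta>\<^sub>2"
    using q0_p0_le_of_decay_inequalities[OF assms(1-3)] by auto
  then have "\<forall>\<^sub>F x in at_infinity. u x \<le> max C\<^sub>1 C\<^sub>2 * norm x powr (- q0 p q \<alpha> \<sigma>\<^sub>1 \<sigma>\<^sub>2)
                                 \<and> v x \<le> max C\<^sub>1 C\<^sub>2 * norm x powr (- p0 p q \<alpha> \<sigma>\<^sub>1 \<sigma>\<^sub>2)"
    using \<open>0 < C\<^sub>1\<close> \<open>0 < C\<^sub>2\<close>
    by (intro eventually_conj eventually_le_powr_mono[OF u_upper] eventually_le_powr_mono[OF v_upper]) auto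
  then show ?thesis
    using \<open>0 < C\<^sub>1\<close> by (intro exI[of _ "max C\<^sub>1 C\<^sub>2"]) auto
qed

lemma positive_solution_lower_bound:
  fixes u v :: "real^'n \<Rightarrow> real" and p q \<alpha> \<sigma>\<^sub>1 \<sigma>\<^sub>2 :: real
  assumes "0 < p" "\<alpha> < CARD('n)" "0 \<le> \<sigma>\<^sub>2" and sol: "positive_solution p q \<alpha> \<sigma>\<^sub>1 \<sigma>\<^sub>2 u v"
  shows "\<exists>c>0. \<forall>\<^sub>F x in at_infinity.
           c / norm x powr (CARD('n) - \<alpha>) \<le> u x \<and>
           c / norm x powr (min (CARD('n) - \<alpha>) (p * (CARD('n) - \<alpha>) - (\<alpha> - \<sigma>\<^sub>2))) \<le> v x"
proof -
  define n where "n = real CARD('n)"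
  have pos: "\<And>x. 0 < u x" "\<And>x. 0 < v x"
    and [measurable]: "u \<in> borel_measurable borel" "v \<in> borel_measurable borel"
    and u: "\<And>x. ennreal (u x) = weighted_riesz \<alpha> \<sigma>\<^sub>1 (\<lambda>y. v y powr q) x"
    and v: "\<And>x. ennreal (v x) = weighted_riesz \<alpha> \<sigma>\<^sub>2 (\<lambda>y. u y powr p) x"
    using sol unfolding positive_solution_def by auto
  then have nonzero: "\<And>x. u x \<noteq> 0" "\<And>x. v x \<noteq> 0"
    by (metis less_irrefl)+
  obtain c\<^sub>u where "0 < c\<^sub>u" and u_lower: "\<forall>\<^sub>F x in at_infinity. c\<^sub>u / norm x powr (n - \<alpha>) \<le> u x"
    using weighted_riesz_ge_kernel_decay[of "\<lambda>y. v y powr q" \<alpha> \<sigma>\<^sub>1] assms(2) pos nonzero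
    unfolding u[symmetric] n_def by (auto simp: less_imp_le)
  obtain c\<^sub>v where "0 < c\<^sub>v" and v_lower: "\<forall>\<^sub>F x in at_infinity. c\<^sub>v / norm x powr (n - \<alpha>) \<le> v x"
    using weighted_riesz_ge_kernel_decay[of "\<lambda>y. u y powr p" \<alpha> \<sigma>\<^sub>2] assms(2) pos nonzero
    unfolding v[symmetric] n_def by (auto simp: less_imp_le)
  have "\<forall>\<^sub>F x in at_infinity. c\<^sub>u * norm x powr (- (n - \<alpha>)) \<le> u x"
    using u_lower unfolding powr_minus_divide by simp
  then obtain K where "0 < K"
    and "\<forall>\<^sub>F x in at_infinity. ennreal (K * norm x powr (\<alpha> - \<sigma>\<^sub>2 - p * (n - \<alpha>))) \<le> ennreal (v x)"
    using weighted_riesz_ge_of_power_lower_bound[of c\<^sub>u "n - \<alpha>" p \<alpha> \<sigma>\<^sub>2 u] assms \<open>0 < c\<^sub>u\<close>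
    unfolding v n_def by auto
  then have "\<forall>\<^sub>F x in at_infinity. K / norm x powr (p * (n - \<alpha>) - (\<alpha> - \<sigma>\<^sub>2)) \<le> v x"
    using pos by (simp add: divide_inverse powr_minus[symmetric] less_imp_le algebra_simps)
  with v_lower have "\<forall>\<^sub>F x in at_infinity.
      min c\<^sub>v K / norm x powr (min (n - \<alpha>) (p * (n - \<alpha>) - (\<alpha> - \<sigma>\<^sub>2))) \<le> v x"
    by (rule eventually_ge_div_powr_min)
  with u_lower have "\<forall>\<^sub>F x in at_infinity. min c\<^sub>u (min c\<^sub>v K) / norm x powr (n - \<alpha>) \<le> u x \<and>
      min c\<^sub>u (min c\<^sub>v K) / norm x powr (min (n - \<alpha>) (p * (n - \<alpha>) - (\<alpha> - \<sigma>\<^sub>2))) \<le> v x"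
    by eventually_elim (meson order.trans divide_right_mono min.cobounded1 min.cobounded2 powr_ge_zero)
  then show ?thesis
    using \<open>0 < c\<^sub>u\<close> \<open>0 < c\<^sub>v\<close> \<open>0 < K\<close> unfolding n_def
    by (intro exI[of _ "min c\<^sub>u (min c\<^sub>v K)"]) auto
qed

theorem theorem1p1:
  fixes u v :: "real^'n \<Rightarrow> real" and p q \<alpha> \<sigma>\<^sub>1 \<sigma>\<^sub>2 :: real
  assumes "CARD('n) \<ge> 3"
    and "p > 0" and "q > 0" and "p * q > 1"
    and "0 < \<alpha>" and "\<alpha> < real CARD('n)"
    and "0 \<le> \<sigma>\<^sub>1" and "\<sigma>\<^sub>1 < \<alpha>" and "0 \<le> \<sigma>\<^sub>2" and "\<sigma>\<^sub>2 < \<alpha>"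
    and sol: "positive_solution p q \<alpha> \<sigma>\<^sub>1 \<sigma>\<^sub>2 u v"
  shows "((\<exists>M. \<forall>x. u x \<le> M) \<and> (\<exists>M. \<forall>x. v x \<le> M) \<and> decaying u v \<longrightarrow>
           (\<exists>C>0. \<forall>\<^sub>F x in at_infinity.
              u x \<le> C * norm x powr (- q0 p q \<alpha> \<sigma>\<^sub>1 \<sigma>\<^sub>2) \<and>
              v x \<le> C * norm x powr (- p0 p q \<alpha> \<sigma>\<^sub>1 \<sigma>\<^sub>2)))
       \<and> (q \<ge> p \<and> \<sigma>\<^sub>1 \<ge> \<sigma>\<^sub>2 \<longrightarrow>
           (\<exists>c>0. \<forall>\<^sub>F x in at_infinity.
              u x \<ge> c / norm x powr (real CARD('n) - \<alpha>) \<and>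
              v x \<ge> c / norm x powr (min (real CARD('n) - \<alpha>)
                                          (p * (real CARD('n) - \<alpha>) - (\<alpha> - \<sigma>\<^sub>2)))))"
proof -
  have "\<alpha> < CARD('n)"
    using assms(6) by simp
  then show ?thesis
    using decaying_solution_upper_bound[OF assms(2-4) _ assms(7,9) sol]
      positive_solution_lower_bound[OF assms(2) _ assms(9) sol]
    by auto
qed

end
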